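(* Let $u$ be a partition with $\omega(u)=n\ge1$ and $d=d(u)$. Define $\Gamma$ by $n+d-2=2(u_1+2u_3+e)+\Gamma$. Then: (i) $\Gamma=-2$ if $\dot n=0$; (ii) $\Gamma=0$ if $\dot n=7\cdot 2^\alpha$ and $u_7=2^\alpha$ for some integer $\alpha\ge0$; (iii) $\Gamma=1$ if $\dot n=2$; (iv) $\Gamma\ge 2$ otherwise.
   Context: A partition is a sequence $u=(u_1,u_2,\dots)$ of nonnegative integers, almost all zero ($u_i$ = number of parts equal to $i$); weight $\omega(u)=\sum_i iu_i$, degree $d(u)=\sum_i u_i$; $\gamma_u=\prod_{i\ge1}(i+1)^{u_i}u_i!$. With $v=v_2$ the $2$-adic valuation, put $e=v(\gamma_u)-v((2u_1)!)-(2u_3+v(u_3!))$ and $\dot n=n-u_1-3u_3$ (equivalently, $\dot n$ is the weight and $e=v(\gamma_{\dot u})$ of the partition $\dot u$ obtained from $u$ by setting $\dot u_1=\dot u_3=0$ and $\dot u_i=u_i$ for $i\ne1,3$). *)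

theory Defs
  imports "HOL-Computational_Algebra.Computational_Algebra"
begin

text \<open>A partition is a function u :: nat => nat with finite support; u i is the number
  of parts equal to i (i >= 1). The value u 0 is ignored.\<close>

definition is_partition :: "(nat \<Rightarrow> nat) \<Rightarrow> bool" where
  "is_partition u \<longleftrightarrow> finite {i. u i \<noteq> 0}"

definition psupp :: "(nat \<Rightarrow> nat) \<Rightarrow> nat set" where
  "psupp u = {i. 0 < i \<and> u i \<noteq> 0}"

definition pweight :: "(nat \<Rightarrow> nat) \<Rightarrow> nat" where
  "pweight u = (\<Sum>i\<in>psupp u. i * u i)"

definition pdegree :: "(nat \<Rightarrow> nat) \<Rightarrow> nat" where
  "pdegree u = (\<Sum>i\<in>psupp u. u i)"

definition pgamma :: "(nat \<Rightarrow> nat) \<Rightarrow> nat" where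
  "pgamma u = (\<Prod>i\<in>psupp u. (i + 1) ^ (u i) * fact (u i))"

definition v2 :: "nat \<Rightarrow> nat" where
  "v2 m = multiplicity (2::nat) m"

definition pe :: "(nat \<Rightarrow> nat) \<Rightarrow> int" where
  "pe u = int (v2 (pgamma u)) - int (v2 (fact (2 * u 1)))
          - (2 * int (u 3) + int (v2 (fact (u 3))))"

definition ndot :: "(nat \<Rightarrow> nat) \<Rightarrow> nat" where
  "ndot u = pweight u - u 1 - 3 * u 3"

definition pGamma :: "(nat \<Rightarrow> nat) \<Rightarrow> int" where
  "pGamma u = int (pweight u) + int (pdegree u) - 2
              - 2 * (int (u 1) + 2 * int (u 3) + pe u)"

end

theory Submission
  imports Defs
begin

text \<open>
  \<open>\<Gamma> + 2\<close> is a sum over the part sizes \<open>i\<close> of \<open>u\<close> of the contributions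
  \<open>(i + 1) u\<^sub>i - 2 v((i + 1)^u\<^sub>i u\<^sub>i!)\<close>. Because \<open>v((2m)!) = m + v(m!)\<close>, the correction
  terms in \<open>e\<close> cancel the contributions of the sizes 1 and 3 exactly, so only the sizes
  present in \<open>\<dot>u\<close> remain. Since \<open>v(m!) < m\<close> for \<open>m \<ge> 1\<close>, and \<open>2 v(i + 1) < i\<close> for
  \<open>i \<ge> 2, i \<noteq> 3\<close>, each of them contributes at least 2; exactly 2 when \<open>i = 7\<close> and \<open>u\<^sub>7\<close>
  is a power of 2, exactly 3 when \<open>i = 2\<close> and \<open>u\<^sub>2 = 1\<close>, and at least 4 otherwise.
\<close>

lemma v2_mult: "a \<noteq> 0 \<Longrightarrow> b \<noteq> 0 \<Longrightarrow> v2 (a * b) = v2 a + v2 b"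
  unfolding v2_def by (rule prime_elem_multiplicity_mult_distrib) auto

lemma v2_power: "a \<noteq> 0 \<Longrightarrow> v2 (a ^ n) = n * v2 a"
  unfolding v2_def by (rule prime_elem_multiplicity_power_distrib) auto

lemma v2_odd: "odd a \<Longrightarrow> v2 a = 0"
  unfolding v2_def by (rule not_dvd_imp_multiplicity_0) auto

lemma v2_double: "a \<noteq> 0 \<Longrightarrow> v2 (2 * a) = Suc (v2 a)"
  unfolding v2_def by (rule multiplicity_times_same) auto

lemma v2_power_of_two [simp]: "v2 (2 ^ n) = n"
  unfolding v2_def by simp

lemma v2_decompose:
  assumes "n \<noteq> 0"
  obtains m where "n = 2 ^ v2 n * m" "odd m"
  unfolding v2_def using multiplicity_decompose'[of n 2] assms by auto

lemma v2_fact_Suc: "v2 (fact (Suc m)) = v2 (fact m) + v2 (Suc m)"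
  using v2_mult[of "Suc m" "fact m"] by (simp add: fact_nonzero)

lemma v2_fact_double: "v2 (fact (2 * m)) = m + v2 (fact m)"
proof (induction m)
  case 0
  show ?case by (simp add: v2_def)
next
  case (Suc m)
  have "2 * Suc m = Suc (Suc (2 * m))" by simp
  then have "v2 (fact (2 * Suc m)) = v2 (fact (2 * m)) + v2 (Suc (2 * m)) + v2 (2 * Suc m)"
    by (simp only: v2_fact_Suc)
  also have "\<dots> = Suc m + v2 (fact (Suc m))"
    using Suc.IH by (simp add: v2_odd v2_double v2_fact_Suc del: mult_Suc_right fact_Suc)
  finally show ?case .
qed

lemma v2_fact_odd: "v2 (fact (Suc (2 * m))) = m + v2 (fact m)"
  by (simp add: v2_fact_Suc v2_odd v2_fact_double del: fact_Suc)

lemma v2_fact_less: "1 \<le> m \<Longrightarrow> v2 (fact m) < m"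
proof (induction m rule: less_induct)
  case (less m)
  obtain k where "m = 2 * k \<or> m = Suc (2 * k)"
    by (metis oddE evenE Suc_eq_plus1)
  then show ?case
  proof
    assume m: "m = 2 * k"
    then have "v2 (fact k) < k" using less by simp
    then show ?case using m by (simp add: v2_fact_double)
  next
    assume m: "m = Suc (2 * k)"
    then have "k = 0 \<or> v2 (fact k) < k" using less.IH[of k] by linarith
    then show ?case using m v2_fact_odd[of k] by (auto simp: v2_def)
  qed
qed

lemma v2_fact_le_minus_two:
  assumes "1 \<le> m" and "\<nexists>a. m = 2 ^ a"
  shows "v2 (fact m) + 2 \<le> m"
  using assms
proof (induction m rule: less_induct)
  case (less m)
  obtain k where "m = 2 * k \<or> m = Suc (2 * k)"
    by (metis oddE evenE Suc_eq_plus1)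
  then show ?case
  proof
    assume m: "m = 2 * k"
    then have "\<nexists>a. k = 2 ^ a" using less.prems(2) by (metis power_Suc)
    then have "v2 (fact k) + 2 \<le> k" using less m by simp
    then show ?case using m by (simp add: v2_fact_double)
  next
    assume m: "m = Suc (2 * k)"
    then have "k \<noteq> 0" using less.prems(2) by (metis mult_0_right power_0 One_nat_def)
    then have "v2 (fact k) < k" by (simp add: v2_fact_less)
    then show ?case unfolding m using v2_fact_odd[of k] by linarith
  qed
qed

lemma v2_fact_power_of_two: "v2 (fact (2 ^ a)) = 2 ^ a - 1"
proof (induction a)
  case 0
  show ?case by (simp add: v2_def)
next
  case (Suc a)
  then show ?case using v2_fact_double[of "2 ^ a"] by simp
qed

lemma two_pow_ge_linear: "4 \<le> k \<Longrightarrow> 2 * k + 4 \<le> (2::nat) ^ k"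
  by (induction k rule: dec_induct) simp_all

lemma twice_v2_add_four_le:
  assumes "3 \<le> n" and "n \<notin> {3, 4, 8}"
  shows "2 * v2 n + 4 \<le> n"
proof -
  obtain m where n: "n = 2 ^ v2 n * m" and "odd m"
    using v2_decompose[of n] assms(1) by auto
  then have "1 \<le> m" by presburger
  consider "v2 n = 0" | "v2 n = 1" | "v2 n = 2" | "v2 n = 3" | "4 \<le> v2 n" by linarith
  then show ?thesis
  proof cases
    case 5
    have "2 ^ v2 n \<le> n" using n \<open>1 \<le> m\<close> by (metis mult_le_mono2 nat_mult_1_right)
    then show ?thesis using two_pow_ge_linear[OF 5] by linarith
  qed (use n \<open>odd m\<close> assms in \<open>simp_all; presburger\<close>)+
qed

definition part_defect :: "nat \<Rightarrow> nat \<Rightarrow> int" where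
  "part_defect i m = int ((i + 1) * m) - 2 * int (m * v2 (i + 1) + v2 (fact m))"

lemma part_defect_eq:
  "part_defect i m = int m * (int i - 1 - 2 * int (v2 (i + 1))) + 2 * (int m - int (v2 (fact m)))"
  unfolding part_defect_def by (simp add: algebra_simps)

lemma part_defect_seven_power_of_two: "part_defect 7 (2 ^ a) = 2"
proof -
  have "v2 8 = 3" using v2_power_of_two[of 3] by simp
  then show ?thesis
    unfolding part_defect_eq v2_fact_power_of_two by (simp add: of_nat_diff)
qed

lemma part_defect_two_one: "part_defect 2 1 = 3"
proof -
  have "v2 3 = 0" by (simp add: v2_odd)
  then show ?thesis unfolding part_defect_def by (simp add: v2_def)
qed

lemma part_defect_ge_two:
  assumes "2 \<le> i" "i \<noteq> 3" "1 \<le> m"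
  shows "2 \<le> part_defect i m"
proof -
  have "2 * v2 (i + 1) + 1 \<le> i"
  proof -
    have "v2 8 = 3" using v2_power_of_two[of 3] by simp
    moreover have "v2 3 = 0" by (simp add: v2_odd)
    ultimately show ?thesis
      using twice_v2_add_four_le[of "i + 1"] assms by (cases "i = 2 \<or> i = 7") auto
  qed
  then have "0 \<le> int m * (int i - 1 - 2 * int (v2 (i + 1)))" by simp
  moreover have "int (v2 (fact m)) < int m" using v2_fact_less[OF assms(3)] by simp
  ultimately show ?thesis unfolding part_defect_eq by simp
qed

lemma part_defect_ge_four:
  assumes "2 \<le> i" "i \<noteq> 3" "1 \<le> m"
    and "\<not> (i = 7 \<and> (\<exists>a. m = 2 ^ a))" and "\<not> (i = 2 \<and> m = 1)"
  shows "4 \<le> part_defect i m"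
proof -
  have less: "int (v2 (fact m)) < int m" using v2_fact_less[OF assms(3)] by simp
  consider "i = 7" | "i = 2" | "i \<notin> {2, 3, 7}" using assms(2) by blast
  then show ?thesis
  proof cases
    case 1
    then have "v2 (fact m) + 2 \<le> m" using assms(3,4) v2_fact_le_minus_two by blast
    moreover have "v2 8 = 3" using v2_power_of_two[of 3] by simp
    ultimately show ?thesis unfolding part_defect_eq 1 by simp
  next
    case 2
    then have "2 \<le> m" using assms(3,5) by simp
    moreover have "v2 3 = 0" by (simp add: v2_odd)
    ultimately show ?thesis using less unfolding part_defect_eq 2 by simp
  next
    case 3
    then have "2 * v2 (i + 1) + 4 \<le> i + 1" using assms(1) by (intro twice_v2_add_four_le) auto
    then have "2 \<le> int i - 1 - 2 * int (v2 (i + 1))" by simp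
    then have "int m * 2 \<le> int m * (int i - 1 - 2 * int (v2 (i + 1)))"
      by (rule mult_left_mono) simp
    moreover have "4 \<le> int m * 2 + 2 * (int m - int (v2 (fact m)))" using less assms(3) by simp
    ultimately show ?thesis unfolding part_defect_eq by linarith
  qed
qed

definition dsupp :: "(nat \<Rightarrow> nat) \<Rightarrow> nat set" where
  "dsupp u = psupp u - {1, 3}"

lemma mem_dsupp: "i \<in> dsupp u \<longleftrightarrow> 2 \<le> i \<and> i \<noteq> 3 \<and> 1 \<le> u i"
  unfolding dsupp_def psupp_def by auto

lemma finite_psupp: "is_partition u \<Longrightarrow> finite (psupp u)"
  unfolding is_partition_def psupp_def by (rule finite_subset[rotated]) auto

lemma finite_dsupp: "is_partition u \<Longrightarrow> finite (dsupp u)"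
  unfolding dsupp_def by (simp add: finite_psupp)

lemma sum_psupp_split:
  fixes h :: "nat \<Rightarrow> 'a::comm_monoid_add"
  assumes "finite (psupp u)" and "\<And>i. i \<in> {1, 3} \<Longrightarrow> u i = 0 \<Longrightarrow> h i = 0"
  shows "sum h (psupp u) = h 1 + h 3 + sum h (dsupp u)"
proof -
  have "sum h (psupp u \<inter> {1, 3}) = sum h {1, 3}"
    by (rule sum.mono_neutral_left) (use assms(2) in \<open>auto simp: psupp_def\<close>)
  then show ?thesis
    unfolding dsupp_def using sum.Int_Diff[OF assms(1), of h "{1, 3}"] by simp
qed

lemma v2_pgamma:
  assumes "is_partition u"
  shows "v2 (pgamma u) = (\<Sum>i\<in>psupp u. u i * v2 (i + 1) + v2 (fact (u i)))"
proof -
  have "v2 (pgamma u) = (\<Sum>i\<in>psupp u. v2 ((i + 1) ^ u i * fact (u i)))"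
    unfolding pgamma_def v2_def
    by (rule prime_elem_multiplicity_prod_distrib) (auto simp: finite_psupp[OF assms] fact_nonzero)
  also have "\<dots> = (\<Sum>i\<in>psupp u. u i * v2 (i + 1) + v2 (fact (u i)))"
    by (rule sum.cong) (auto simp: v2_mult v2_power fact_nonzero)
  finally show ?thesis .
qed

lemma ndot_eq_sum:
  assumes "is_partition u"
  shows "ndot u = (\<Sum>i\<in>dsupp u. i * u i)"
  unfolding ndot_def pweight_def
  by (subst sum_psupp_split[OF finite_psupp[OF assms]]) auto

lemma pGamma_eq_sum:
  assumes "is_partition u"
  shows "pGamma u = (\<Sum>i\<in>dsupp u. part_defect i (u i)) - 2"
proof -
  note split = sum_psupp_split[OF finite_psupp[OF assms]]
  define g where "g i = u i * v2 (i + 1) + v2 (fact (u i))" for i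
  have "v2 (pgamma u) = g 1 + g 3 + (\<Sum>i\<in>dsupp u. g i)"
    unfolding v2_pgamma[OF assms] g_def[symmetric] by (rule split) (auto simp: g_def v2_def)
  moreover have "g 1 = v2 (fact (2 * u 1))"
    using v2_power_of_two[of 1] v2_fact_double[of "u 1"] by (simp add: g_def numeral_2_eq_2)
  moreover have "g 3 = 2 * u 3 + v2 (fact (u 3))"
    using v2_power_of_two[of 2] by (simp add: g_def)
  ultimately have pe: "pe u = int (\<Sum>i\<in>dsupp u. g i)"
    unfolding pe_def by simp
  have weight: "pweight u = u 1 + 3 * u 3 + (\<Sum>i\<in>dsupp u. i * u i)"
    unfolding pweight_def by (subst split) auto
  have degree: "pdegree u = u 1 + u 3 + (\<Sum>i\<in>dsupp u. u i)"
    unfolding pdegree_def by (subst split) auto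
  show ?thesis
    unfolding pGamma_def pe weight degree part_defect_def g_def
    by (simp add: sum_subtractf sum.distrib sum_distrib_left algebra_simps)
qed

lemma ndot_eq_zero_iff: "is_partition u \<Longrightarrow> ndot u = 0 \<longleftrightarrow> dsupp u = {}"
  by (auto simp: ndot_eq_sum finite_dsupp mem_dsupp)

lemma dsupp_eq_singleton:
  assumes "is_partition u" "i \<in> dsupp u" "ndot u = i * u i"
  shows "dsupp u = {i}"
proof -
  have "ndot u = i * u i + (\<Sum>j\<in>dsupp u - {i}. j * u j)"
    unfolding ndot_eq_sum[OF assms(1)] using finite_dsupp[OF assms(1)] assms(2) by (rule sum.remove)
  then have "dsupp u - {i} = {}"
    using assms(1,3) by (auto simp: finite_dsupp mem_dsupp)
  then show ?thesis using assms(2) by blast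
qed

lemma pGamma_ndot_zero: "is_partition u \<Longrightarrow> ndot u = 0 \<Longrightarrow> pGamma u = -2"
  by (simp add: pGamma_eq_sum ndot_eq_zero_iff)

lemma pGamma_seven_power_of_two:
  assumes "is_partition u" "ndot u = 7 * 2 ^ a" "u 7 = 2 ^ a"
  shows "pGamma u = 0"
proof -
  have "dsupp u = {7}"
    using assms by (intro dsupp_eq_singleton) (auto simp: mem_dsupp)
  then show ?thesis
    using assms(3) by (simp add: pGamma_eq_sum[OF assms(1)] part_defect_seven_power_of_two)
qed

lemma pGamma_ndot_two:
  assumes "is_partition u" "ndot u = 2"
  shows "pGamma u = 1"
proof -
  obtain i where i: "i \<in> dsupp u"
    using assms ndot_eq_zero_iff by fastforce
  have le: "i * u i \<le> 2"
    using member_le_sum[OF i _ finite_dsupp[OF assms(1)], of "\<lambda>j. j * u j"] assms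
    by (simp add: ndot_eq_sum)
  have "2 \<le> i" "1 \<le> u i" using i by (auto simp: mem_dsupp)
  moreover have "i \<le> i * u i" using \<open>1 \<le> u i\<close> by simp
  ultimately have "i = 2" using le by linarith
  then have "u i = 1" using le \<open>1 \<le> u i\<close> by simp
  then have "dsupp u = {2}" and "u 2 = 1"
    using dsupp_eq_singleton[OF assms(1) i] assms(2) \<open>i = 2\<close> by auto
  then show ?thesis using part_defect_two_one by (simp add: pGamma_eq_sum[OF assms(1)])
qed

lemma pGamma_ge_two:
  assumes "is_partition u" "ndot u \<noteq> 0" "ndot u \<noteq> 2"
    and "\<nexists>a. ndot u = 7 * 2 ^ a \<and> u 7 = 2 ^ a"
  shows "2 \<le> pGamma u"
proof -
  obtain i where i: "i \<in> dsupp u"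
    using assms(1,2) by (auto simp: ndot_eq_zero_iff)
  have "4 \<le> (\<Sum>j\<in>dsupp u. part_defect j (u j))"
  proof (cases "dsupp u = {i}")
    case True
    then have "ndot u = i * u i" by (simp add: ndot_eq_sum[OF assms(1)])
    then have "4 \<le> part_defect i (u i)"
      using i assms(3,4) by (intro part_defect_ge_four) (auto simp: mem_dsupp)
    then show ?thesis using True by simp
  next
    case False
    then obtain j where "j \<in> dsupp u" "j \<noteq> i" using i by blast
    then have "card {i, j} \<le> card (dsupp u)"
      using i finite_dsupp[OF assms(1)] by (intro card_mono) auto
    then have "2 \<le> card (dsupp u)" using \<open>j \<noteq> i\<close> by simp
    moreover have "of_nat (card (dsupp u)) * 2 \<le> (\<Sum>j\<in>dsupp u. part_defect j (u j))"
      by (rule sum_bounded_below) (auto simp: mem_dsupp intro: part_defect_ge_two)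
    ultimately show ?thesis by linarith
  qed
  then show ?thesis by (simp add: pGamma_eq_sum[OF assms(1)])
qed

theorem lemma4p6:
  fixes u :: "nat \<Rightarrow> nat"
  assumes "is_partition u" and "pweight u \<ge> 1"
  shows "(ndot u = 0 \<longrightarrow> pGamma u = -2)
       \<and> ((\<exists>\<alpha>::nat. ndot u = 7 * 2 ^ \<alpha> \<and> u 7 = 2 ^ \<alpha>) \<longrightarrow> pGamma u = 0)
       \<and> (ndot u = 2 \<longrightarrow> pGamma u = 1)
       \<and> (ndot u \<noteq> 0 \<and> \<not> (\<exists>\<alpha>::nat. ndot u = 7 * 2 ^ \<alpha> \<and> u 7 = 2 ^ \<alpha>)
            \<and> ndot u \<noteq> 2 \<longrightarrow> pGamma u \<ge> 2)"
  using pGamma_ndot_zero pGamma_seven_power_of_two pGamma_ndot_two pGamma_ge_two assms(1)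
  by blast

end
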